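(* Let $g$ be univalent in $\mathbb{D}$. Then there do not exist $\eta\in(0,1)$, $\delta>0$ and $c>0$ such that $m(G_c\cap\Delta(\alpha,\eta))\ge\delta\,m(\Delta(\alpha,\eta))$ for all $\alpha\in\mathbb{D}$, where $G_c=\{z\in\mathbb{D}:|g'(z)|(1-|z|)>c\}$.
   Context: $\mathbb{D}$ is the unit disc, $dm$ normalized area measure, and $\Delta(\alpha,\eta)=\{z\in\mathbb{D}:|\frac{\alpha-z}{1-\bar\alpha z}|<\eta\}$ the pseudohyperbolic disc. *)

theory Defs
  imports "HOL-Complex_Analysis.Complex_Analysis"
begin

definition norm_area :: "complex set \<Rightarrow> real" where
  "norm_area A = measure lborel A / pi"

definition pseudo_disc :: "complex \<Rightarrow> real \<Rightarrow> complex set" where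
  "pseudo_disc \<alpha> \<eta> = {z \<in> ball 0 1. cmod ((\<alpha> - z) / (1 - cnj \<alpha> * z)) < \<eta>}"

definition univalent :: "(complex \<Rightarrow> complex) \<Rightarrow> bool" where
  "univalent g \<longleftrightarrow> g holomorphic_on ball 0 1 \<and> inj_on g (ball 0 1)"

definition G_set :: "(complex \<Rightarrow> complex) \<Rightarrow> real \<Rightarrow> complex set" where
  "G_set g c = {z \<in> ball 0 1. cmod (deriv g z) * (1 - cmod z) > c}"

end

theory Submission
  imports Defs
begin

text \<open>A univalent \<open>g\<close> omits some value \<open>w\<^sub>0\<close>, so by Koebe's square-root trick
  \<open>g - w\<^sub>0 = \<phi>\<^sup>2\<close> with \<open>\<phi>\<close> univalent and \<open>\<phi>(\<bbbD>) \<inter> -\<phi>(\<bbbD>) = {}\<close>; since \<open>\<phi>(\<bbbD>)\<close> is open,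
  \<open>u = 1 / (\<phi> + \<phi>(0))\<close> is bounded.  Near a point \<open>\<alpha>\<close> where \<open>|u|\<close> almost attains its supremum,
  the Schwarz--Pick lemma makes \<open>u\<close>, and hence \<open>g\<close>, almost constant on a pseudohyperbolic disc
  around \<open>\<alpha>\<close>.  The Cauchy estimate then gives \<open>|g'(z)| (1 - |z|) \<le> c\<close> on the smaller disc
  \<open>\<Delta>(\<alpha>, \<eta>)\<close>, which therefore misses \<open>G\<^sub>c\<close> altogether.\<close>

definition disc_involution :: "complex \<Rightarrow> complex \<Rightarrow> complex" where
  "disc_involution a z = (a - z) / (1 - cnj a * z)"

lemma mem_pseudo_disc:
  "z \<in> pseudo_disc \<alpha> \<eta> \<longleftrightarrow> cmod z < 1 \<and> cmod (disc_involution \<alpha> z) < \<eta>"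
  by (simp add: pseudo_disc_def disc_involution_def)

lemma pseudo_disc_subset_ball: "pseudo_disc \<alpha> \<eta> \<subseteq> ball 0 1"
  by (auto simp: pseudo_disc_def)

lemma norm_one_minus_cnj_mult_ge:
  fixes a z :: complex
  assumes "cmod a < 1" "cmod z \<le> 1"
  shows "1 - cmod a \<le> cmod (1 - cnj a * z)"
proof -
  have "cmod (cnj a * z) \<le> cmod a" using assms by (simp add: norm_mult mult_left_le)
  moreover have "1 - cmod (cnj a * z) \<le> cmod (1 - cnj a * z)"
    by (metis norm_one norm_triangle_ineq2)
  ultimately show ?thesis by linarith
qed

lemma one_minus_cnj_mult_nonzero:
  fixes a z :: complex
  shows "cmod a < 1 \<Longrightarrow> cmod z \<le> 1 \<Longrightarrow> 1 - cnj a * z \<noteq> 0"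
  using norm_one_minus_cnj_mult_ge[of a z] by auto

lemma norm_one_minus_cnj_self:
  fixes a :: complex
  assumes "cmod a < 1"
  shows "cmod (1 - cnj a * a) = 1 - (cmod a)^2"
proof -
  have "1 - cnj a * a = complex_of_real (1 - (cmod a)^2)"
    using complex_norm_square[of a] by (simp add: mult.commute)
  moreover have "(cmod a)^2 \<le> 1" using assms by (simp add: abs_square_le_1)
  ultimately show ?thesis by (simp del: of_real_diff)
qed

lemma norm_one_minus_cnj_mult_squared:
  fixes a z :: complex
  shows "(cmod (1 - cnj a * z))^2 - (cmod (a - z))^2 = (1 - (cmod a)^2) * (1 - (cmod z)^2)"
  unfolding cmod_power2 by (simp add: power2_eq_square algebra_simps)

subsection \<open>The involutive automorphism of the disc\<close>

lemma disc_involution_0 [simp]: "disc_involution a 0 = a"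
  and disc_involution_self [simp]: "disc_involution a a = 0"
  by (simp_all add: disc_involution_def)

lemma disc_involution_involutive:
  fixes a z :: complex
  assumes "cmod a < 1" "cmod z < 1"
  shows "disc_involution a (disc_involution a z) = z"
proof -
  have d: "1 - cnj a * z \<noteq> 0" and e: "1 - cnj a * a \<noteq> 0"
    using assms one_minus_cnj_mult_nonzero[of a z] one_minus_cnj_mult_nonzero[of a a] by auto
  have "a - disc_involution a z = z * (1 - cnj a * a) / (1 - cnj a * z)"
    and "1 - cnj a * disc_involution a z = (1 - cnj a * a) / (1 - cnj a * z)"
    using d by (simp_all add: disc_involution_def field_simps)
  then show ?thesis using d e by (simp add: disc_involution_def)
qed

lemma disc_involution_norm_lt_1:
  fixes a z :: complex
  assumes "cmod a < 1" "cmod z < 1"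
  shows "cmod (disc_involution a z) < 1"
proof -
  have "disc_involution a z = - Moebius_function 0 a z"
    by (simp add: disc_involution_def Moebius_function_simple minus_divide_left)
  then show ?thesis using Moebius_function_norm_lt_1[OF assms] by simp
qed

lemma disc_involution_holomorphic:
  "cmod a < 1 \<Longrightarrow> disc_involution a holomorphic_on ball 0 1"
  unfolding disc_involution_def
  by (intro holomorphic_intros) (use one_minus_cnj_mult_nonzero[of a] in force)

lemma disc_involution_diff:
  fixes a z w :: complex
  assumes "1 - cnj a * w \<noteq> 0" "1 - cnj a * z \<noteq> 0"
  shows "disc_involution a w - disc_involution a z
           = (z - w) * (1 - cnj a * a) / ((1 - cnj a * w) * (1 - cnj a * z))"
  using assms by (simp add: disc_involution_def field_simps)

subsection \<open>Geometry of pseudohyperbolic discs\<close>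

lemma pseudo_disc_denominator_bounds:
  assumes "cmod \<alpha> < 1" "z \<in> pseudo_disc \<alpha> \<eta>"
  shows "1 - cmod \<alpha> \<le> cmod (1 - cnj \<alpha> * z)"
    and "cmod (\<alpha> - z) < \<eta> * cmod (1 - cnj \<alpha> * z)"
proof -
  show d: "1 - cmod \<alpha> \<le> cmod (1 - cnj \<alpha> * z)"
    using assms by (intro norm_one_minus_cnj_mult_ge) (auto simp: mem_pseudo_disc)
  then have "cmod (1 - cnj \<alpha> * z) > 0" using assms by linarith
  then show "cmod (\<alpha> - z) < \<eta> * cmod (1 - cnj \<alpha> * z)"
    using assms by (simp add: mem_pseudo_disc disc_involution_def norm_divide divide_less_eq)
qed

lemma ball_subset_pseudo_disc:
  assumes "0 < \<eta>" "\<eta> < 1" "cmod \<alpha> < 1"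
  shows "ball \<alpha> (\<eta> * (1 - cmod \<alpha>) / 2) \<subseteq> pseudo_disc \<alpha> \<eta>"
proof
  fix z assume "z \<in> ball \<alpha> (\<eta> * (1 - cmod \<alpha>) / 2)"
  define t where "t = \<eta> * (1 - cmod \<alpha>) / 2"
  have zt: "cmod (\<alpha> - z) < t" using \<open>z \<in> _\<close> by (simp add: t_def dist_norm)
  have tle: "t \<le> (1 - cmod \<alpha>) / 2" using assms by (simp add: t_def mult_left_le_one_le)
  have "cmod z \<le> cmod \<alpha> + cmod (\<alpha> - z)" using norm_triangle_ineq4[of \<alpha> "\<alpha> - z"] by simp
  then have z1: "cmod z < 1" using zt tle assms(3) by argo
  have "1 - cnj \<alpha> * z = (1 - cnj \<alpha> * \<alpha>) + cnj \<alpha> * (\<alpha> - z)" by (simp add: algebra_simps)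
  then have "cmod (1 - cnj \<alpha> * \<alpha>) - cmod (cnj \<alpha> * (\<alpha> - z)) \<le> cmod (1 - cnj \<alpha> * z)"
    by (metis norm_diff_ineq)
  moreover have "cmod (cnj \<alpha> * (\<alpha> - z)) \<le> cmod (\<alpha> - z)"
    using assms(3) by (simp add: norm_mult mult_left_le_one_le)
  moreover have "(cmod \<alpha>)^2 \<le> cmod \<alpha>" using assms by (simp add: power2_eq_square mult_left_le_one_le)
  ultimately have d: "1 - cmod \<alpha> - t \<le> cmod (1 - cnj \<alpha> * z)"
    using zt norm_one_minus_cnj_self[OF assms(3)] by linarith
  have "\<eta> * (1 - cmod \<alpha> - t) = t * (2 - \<eta>)" by (simp add: t_def field_simps)
  moreover have "t \<ge> 0" using assms by (simp add: t_def)
  ultimately have "t \<le> \<eta> * (1 - cmod \<alpha> - t)"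
    using assms mult_left_mono[of 1 "2 - \<eta>" t] by simp
  also have "\<dots> \<le> \<eta> * cmod (1 - cnj \<alpha> * z)" using d assms by (intro mult_left_mono) auto
  finally have "cmod (\<alpha> - z) < \<eta> * cmod (1 - cnj \<alpha> * z)" using zt by simp
  moreover have "cmod (1 - cnj \<alpha> * z) > 0" using d tle assms by argo
  ultimately show "z \<in> pseudo_disc \<alpha> \<eta>"
    using z1 by (simp add: mem_pseudo_disc disc_involution_def norm_divide divide_less_eq)
qed

lemma one_minus_norm_le_of_mem_pseudo_disc:
  assumes "0 < \<eta>" "\<eta> < 1" "cmod \<alpha> < 1" "z \<in> pseudo_disc \<alpha> \<eta>"
  shows "1 - cmod z \<le> 2 * (1 - cmod \<alpha>) / (1 - \<eta>)"
proof -
  define d where "d = cmod (1 - cnj \<alpha> * z)"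
  have near: "cmod (\<alpha> - z) \<le> \<eta> * d"
    using pseudo_disc_denominator_bounds(2)[OF assms(3,4)] by (simp add: d_def)
  have "1 - cnj \<alpha> * z = (1 - cnj \<alpha> * \<alpha>) + cnj \<alpha> * (\<alpha> - z)" by (simp add: algebra_simps)
  then have "d \<le> cmod (1 - cnj \<alpha> * \<alpha>) + cmod (cnj \<alpha> * (\<alpha> - z))"
    unfolding d_def by (metis norm_triangle_ineq)
  then have "d \<le> (1 - (cmod \<alpha>)^2) + cmod \<alpha> * cmod (\<alpha> - z)"
    by (simp add: norm_mult norm_one_minus_cnj_self[OF assms(3)])
  moreover have "cmod \<alpha> * cmod (\<alpha> - z) \<le> cmod (\<alpha> - z)"
    using assms by (simp add: mult_left_le_one_le)
  moreover have "2 * cmod \<alpha> - 1 \<le> (cmod \<alpha>)^2"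
    using sum_power2_ge_zero[of "cmod \<alpha> - 1" 0] by (simp add: power2_eq_square algebra_simps)
  ultimately have "d * (1 - \<eta>) \<le> 2 * (1 - cmod \<alpha>)" using near by (simp add: algebra_simps)
  then have "\<eta> * d \<le> \<eta> * (2 * (1 - cmod \<alpha>) / (1 - \<eta>))"
    using assms by (intro mult_left_mono) (auto simp: le_divide_eq mult.commute)
  with near have az: "cmod (\<alpha> - z) \<le> \<eta> * (2 * (1 - cmod \<alpha>) / (1 - \<eta>))" by linarith
  have "cmod \<alpha> \<le> cmod z + cmod (\<alpha> - z)" using norm_triangle_ineq4[of z "z - \<alpha>"] by (simp add: norm_minus_commute)
  then have "1 - cmod z \<le> (1 - cmod \<alpha>) + \<eta> * (2 * (1 - cmod \<alpha>) / (1 - \<eta>))" using az by linarith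
  also have "\<dots> = (1 - cmod \<alpha>) * (1 + \<eta>) / (1 - \<eta>)" using assms by (simp add: field_simps)
  also have "\<dots> \<le> (1 - cmod \<alpha>) * 2 / (1 - \<eta>)"
    using assms by (intro divide_right_mono mult_left_mono) auto
  finally show ?thesis by (simp add: mult.commute)
qed

text \<open>The identity \<open>|1 - cnj \<alpha> z|\<^sup>2 - |\<alpha> - z|\<^sup>2 = (1 - |\<alpha>|\<^sup>2)(1 - |z|\<^sup>2)\<close> keeps \<open>z\<close> away from the circle.\<close>

lemma one_minus_norm_ge_of_mem_pseudo_disc:
  assumes "0 < \<eta>" "\<eta> < 1" "cmod \<alpha> < 1" "z \<in> pseudo_disc \<alpha> \<eta>"
  shows "(1 - \<eta>^2) * (1 - cmod \<alpha>) / 4 \<le> 1 - cmod z"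
proof -
  define d where "d = cmod (1 - cnj \<alpha> * z)"
  have z1: "cmod z < 1" using assms by (simp add: mem_pseudo_disc)
  have "(cmod (\<alpha> - z))^2 \<le> \<eta>^2 * d^2"
    using pseudo_disc_denominator_bounds(2)[OF assms(3,4)] power_mono[of "cmod (\<alpha> - z)" "\<eta> * d" 2]
    by (simp add: d_def power_mult_distrib)
  moreover have "d^2 - (cmod (\<alpha> - z))^2 = (1 - (cmod \<alpha>)^2) * (1 - (cmod z)^2)"
    using norm_one_minus_cnj_mult_squared[of \<alpha> z] by (simp add: d_def)
  moreover have "(1 - \<eta>^2) * d^2 = d^2 - \<eta>^2 * d^2" by (simp add: algebra_simps)
  ultimately have squares: "(1 - \<eta>^2) * d^2 \<le> (1 - (cmod \<alpha>)^2) * (1 - (cmod z)^2)" by linarith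
  have "(1 - cmod \<alpha>) * ((1 - \<eta>^2) * (1 - cmod \<alpha>)) = (1 - \<eta>^2) * (1 - cmod \<alpha>)^2"
    by (simp add: power2_eq_square)
  also have "\<dots> \<le> (1 - \<eta>^2) * d^2"
    using pseudo_disc_denominator_bounds(1)[OF assms(3,4)] assms unfolding d_def
    by (intro mult_left_mono power_mono) (auto simp: abs_square_le_1 power_le_one)
  also have "\<dots> \<le> (1 - (cmod \<alpha>)^2) * (1 - (cmod z)^2)" by (rule squares)
  also have "\<dots> = (1 - cmod \<alpha>) * (1 + cmod \<alpha>) * ((1 - cmod z) * (1 + cmod z))"
    by (simp add: power2_eq_square algebra_simps)
  also have "\<dots> \<le> (1 - cmod \<alpha>) * 2 * ((1 - cmod z) * 2)"
    using assms z1 by (intro mult_mono) auto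
  also have "\<dots> = (1 - cmod \<alpha>) * (4 * (1 - cmod z))" by (simp add: algebra_simps)
  finally show ?thesis using assms by (simp add: mult_le_cancel_left_pos)
qed

lemma ball_subset_pseudo_disc_enlarged:
  assumes "0 < \<eta>" "\<eta> < 1" "cmod \<alpha> < 1" "z \<in> pseudo_disc \<alpha> \<eta>"
  shows "ball z ((1 - \<eta>) * (1 - cmod \<alpha>) / 8) \<subseteq> pseudo_disc \<alpha> ((1 + \<eta>) / 2)"
proof
  fix w assume "w \<in> ball z ((1 - \<eta>) * (1 - cmod \<alpha>) / 8)"
  then have wz: "cmod (z - w) < (1 - \<eta>) * (1 - cmod \<alpha>) / 8" by (simp add: dist_norm)
  have a0: "0 < 1 - cmod \<alpha>" using assms by simp
  have "\<eta>^2 \<le> \<eta>" using assms by (simp add: power2_eq_square mult_left_le_one_le)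
  then have "(1 - \<eta>) * (1 - cmod \<alpha>) / 4 \<le> (1 - \<eta>^2) * (1 - cmod \<alpha>) / 4"
    using a0 by (intro divide_right_mono mult_right_mono) auto
  also have "\<dots> \<le> 1 - cmod z" by (rule one_minus_norm_ge_of_mem_pseudo_disc[OF assms])
  finally have "cmod z + cmod (z - w) < 1"
    using wz mult_pos_pos[of "1 - \<eta>" "1 - cmod \<alpha>"] assms a0 by linarith
  then have w1: "cmod w < 1" using norm_triangle_ineq4[of z "z - w"] by simp
  have dw: "1 - cmod \<alpha> \<le> cmod (1 - cnj \<alpha> * w)"
    using assms w1 by (intro norm_one_minus_cnj_mult_ge) auto
  have dz: "1 - cmod \<alpha> \<le> cmod (1 - cnj \<alpha> * z)" by (rule pseudo_disc_denominator_bounds(1)[OF assms(3,4)])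
  have "cmod (disc_involution \<alpha> w - disc_involution \<alpha> z)
        = cmod (z - w) * (1 - (cmod \<alpha>)^2) / (cmod (1 - cnj \<alpha> * w) * cmod (1 - cnj \<alpha> * z))"
  proof -
    have "1 - cnj \<alpha> * w \<noteq> 0" "1 - cnj \<alpha> * z \<noteq> 0" using a0 dw dz by auto
    then show ?thesis
      by (simp add: disc_involution_diff norm_mult norm_divide norm_one_minus_cnj_self[OF assms(3)])
  qed
  also have "\<dots> \<le> cmod (z - w) * ((1 - cmod \<alpha>) * (1 + cmod \<alpha>)) / ((1 - cmod \<alpha>) * (1 - cmod \<alpha>))"
  proof (rule frac_le)
    show "cmod (z - w) * (1 - (cmod \<alpha>)^2) \<le> cmod (z - w) * ((1 - cmod \<alpha>) * (1 + cmod \<alpha>))"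
      by (simp add: power2_eq_square algebra_simps)
    show "(1 - cmod \<alpha>) * (1 - cmod \<alpha>) \<le> cmod (1 - cnj \<alpha> * w) * cmod (1 - cnj \<alpha> * z)"
      using a0 dw dz by (intro mult_mono) auto
  qed (use a0 assms(3) in auto)
  also have "\<dots> = cmod (z - w) * (1 + cmod \<alpha>) / (1 - cmod \<alpha>)" using a0 by simp
  also have "\<dots> \<le> cmod (z - w) * 2 / (1 - cmod \<alpha>)"
    using a0 assms(3) by (intro divide_right_mono mult_left_mono) auto
  also have "\<dots> < (1 - \<eta>) / 4" using wz a0 by (simp add: divide_less_eq)
  finally have "cmod (disc_involution \<alpha> w - disc_involution \<alpha> z) < (1 - \<eta>) / 4" .
  moreover have "cmod (disc_involution \<alpha> z) < \<eta>" using assms by (simp add: mem_pseudo_disc)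
  ultimately have "cmod (disc_involution \<alpha> w) < (1 + \<eta>) / 2"
    using norm_triangle_ineq2[of "disc_involution \<alpha> w" "disc_involution \<alpha> z"] assms(2) by argo
  then show "w \<in> pseudo_disc \<alpha> ((1 + \<eta>) / 2)" using w1 by (simp add: mem_pseudo_disc)
qed

lemma norm_area_pseudo_disc_pos:
  assumes "0 < \<eta>" "\<eta> < 1" "cmod \<alpha> < 1"
  shows "norm_area (pseudo_disc \<alpha> \<eta>) > 0"
proof -
  have "pseudo_disc \<alpha> \<eta> \<in> sets lborel" unfolding pseudo_disc_def by measurable
  moreover have "emeasure lborel (pseudo_disc \<alpha> \<eta>) \<le> emeasure lborel (ball (0::complex) 1)"
    by (intro emeasure_mono pseudo_disc_subset_ball) simp
  ultimately have fm: "pseudo_disc \<alpha> \<eta> \<in> fmeasurable lborel"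
    using emeasure_lborel_ball_finite[of 0 1] by (intro fmeasurableI) (auto intro: order.strict_trans1)
  have "0 < measure lborel (ball \<alpha> (\<eta> * (1 - cmod \<alpha>) / 2))"
    using assms by (simp add: content_ball_pos)
  also have "\<dots> \<le> measure lborel (pseudo_disc \<alpha> \<eta>)"
    by (rule measure_mono_fmeasurable[OF ball_subset_pseudo_disc[OF assms] _ fm]) simp
  finally show ?thesis by (simp add: norm_area_def)
qed

subsection \<open>Function theory\<close>

lemma Schwarz_Pick_pseudo_disc:
  fixes H :: "complex \<Rightarrow> complex"
  assumes holH: "H holomorphic_on ball 0 1" and H1: "\<And>z. cmod z < 1 \<Longrightarrow> cmod (H z) < 1"
    and \<alpha>: "cmod \<alpha> < 1" and \<eta>: "\<eta> < 1" and z: "z \<in> pseudo_disc \<alpha> \<eta>"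
  shows "cmod (H z - H \<alpha>) \<le> (1 - (cmod (H \<alpha>))^2) / (1 - \<eta>)"
proof -
  define a where "a = H \<alpha>"
  have a: "cmod a < 1" using H1 \<alpha> by (simp add: a_def)
  define K where "K = disc_involution a \<circ> H \<circ> disc_involution \<alpha>"
  have "H ` ball 0 1 \<subseteq> ball 0 1" "disc_involution \<alpha> ` ball 0 1 \<subseteq> ball 0 1"
    using H1 disc_involution_norm_lt_1[OF \<alpha>] by auto
  then have holK: "K holomorphic_on ball 0 1"
    unfolding K_def using holH disc_involution_holomorphic[OF a] disc_involution_holomorphic[OF \<alpha>]
    by (metis holomorphic_on_compose_gen)
  have K1: "cmod (K v) < 1" if "cmod v < 1" for v
    using that by (simp add: K_def H1 \<alpha> a disc_involution_norm_lt_1)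
  have "K 0 = 0" by (simp add: K_def a_def)
  define w where "w = disc_involution \<alpha> z"
  have z1: "cmod z < 1" and w: "cmod w < \<eta>" using z by (auto simp: mem_pseudo_disc w_def)
  define u where "u = K w"
  have u: "cmod u < \<eta>"
    using Schwarz_Lemma(1)[OF holK \<open>K 0 = 0\<close> K1, of w] w \<eta> by (simp add: u_def)
  have "H z = disc_involution a u"
    using disc_involution_involutive[OF \<alpha> z1] disc_involution_involutive[OF a H1[OF z1]]
    by (simp add: u_def K_def w_def)
  have den: "1 - \<eta> < cmod (1 - cnj a * u)"
  proof -
    have "cmod (cnj a * u) \<le> cmod u" using a by (simp add: norm_mult mult_left_le_one_le)
    then show ?thesis using norm_triangle_ineq2[of 1 "cnj a * u"] u by simp
  qed
  then have "1 - cnj a * u \<noteq> 0" using \<eta> by force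
  then have "H z - a = - u * (1 - cnj a * a) / (1 - cnj a * u)"
    using \<open>H z = _\<close> disc_involution_diff[of a u 0] by simp
  then have "cmod (H z - a) = cmod u * (1 - (cmod a)^2) / cmod (1 - cnj a * u)"
    by (simp add: norm_mult norm_divide norm_one_minus_cnj_self[OF a])
  also have "\<dots> \<le> cmod u * (1 - (cmod a)^2) / (1 - \<eta>)"
    using den \<eta> a by (intro divide_left_mono mult_nonneg_nonneg mult_pos_pos) (auto simp: abs_square_le_1)
  also have "\<dots> \<le> (1 - (cmod a)^2) / (1 - \<eta>)"
    using u \<eta> a by (intro divide_right_mono mult_left_le_one_le) (auto simp: abs_square_le_1)
  finally show ?thesis by (simp add: a_def)
qed

text \<open>Rescaled by \<open>m (1 + \<tau>)\<close>, \<open>u\<close> becomes a self-map of the disc whose modulus at \<open>\<alpha>\<close> is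
  at least \<open>1 - 2\<tau>\<close>; Schwarz--Pick then pins it down on the whole pseudohyperbolic disc.\<close>

lemma holomorphic_close_near_almost_maximum:
  fixes u :: "complex \<Rightarrow> complex"
  assumes holu: "u holomorphic_on ball 0 1" and le_m: "\<And>z. cmod z < 1 \<Longrightarrow> cmod (u z) \<le> m"
    and m: "0 < m" and \<tau>: "0 < \<tau>" "\<tau> \<le> 1"
    and \<alpha>: "cmod \<alpha> < 1" "m - m * \<tau> \<le> cmod (u \<alpha>)" and \<eta>: "\<eta> < 1" and z: "z \<in> pseudo_disc \<alpha> \<eta>"
  shows "cmod (u z - u \<alpha>) \<le> 8 * m * \<tau> / (1 - \<eta>)"
proof -
  define k where "k = m * (1 + \<tau>)"
  define H where "H z = u z / complex_of_real k" for z
  have k: "0 < k" "k \<le> 2 * m" using m \<tau> mult_left_le_one_le[of m \<tau>] by (simp_all add: k_def)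
  have normH: "cmod (H z) = cmod (u z) / k" for z using k by (simp add: H_def norm_divide)
  have holH: "H holomorphic_on ball 0 1"
    unfolding H_def using k by (intro holomorphic_intros holu) auto
  have H1: "cmod (H z) < 1" if "cmod z < 1" for z
  proof -
    have "m + 0 < m + m * \<tau>" using m \<tau> by simp
    then have "cmod (u z) < k" using le_m[OF that] by (simp add: k_def algebra_simps)
    then show ?thesis using k by (simp add: normH)
  qed
  have "1 - 2 * \<tau> \<le> (1 - \<tau>) / (1 + \<tau>)"
    using \<tau> mult_nonneg_nonneg[of \<tau> \<tau>] by (simp add: le_divide_eq algebra_simps)
  also have "\<dots> = (m - m * \<tau>) / k" using m
    by (metis k_def mult.right_neutral mult_divide_mult_cancel_left_if right_diff_distrib order_less_irrefl)
  also have "\<dots> \<le> cmod (H \<alpha>)" using \<alpha> k by (simp add: normH divide_right_mono)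
  finally have "(1 - cmod (H \<alpha>)) * (1 + cmod (H \<alpha>)) \<le> (2 * \<tau>) * 2"
    using H1[OF \<alpha>(1)] by (intro mult_mono) auto
  then have "1 - (cmod (H \<alpha>))^2 \<le> 4 * \<tau>" by (simp add: power2_eq_square algebra_simps)
  then have "cmod (H z - H \<alpha>) \<le> 4 * \<tau> / (1 - \<eta>)"
    using order.trans[OF Schwarz_Pick_pseudo_disc[OF holH _ \<alpha>(1) \<eta> z] divide_right_mono] H1 \<eta> by simp
  then have "k * cmod (H z - H \<alpha>) \<le> (2 * m) * (4 * \<tau> / (1 - \<eta>))"
    using k m by (intro mult_mono) auto
  moreover have "u z - u \<alpha> = complex_of_real k * (H z - H \<alpha>)" using k by (simp add: H_def field_simps)
  ultimately show ?thesis using k by (simp add: norm_mult)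
qed

lemma holomorphic_bounded_close_to_sup:
  fixes u :: "complex \<Rightarrow> complex"
  assumes holu: "u holomorphic_on ball 0 1" and bdd: "bdd_above ((\<lambda>z. cmod (u z)) ` ball 0 1)"
    and \<eta>0: "0 \<le> \<eta>" and \<eta>: "\<eta> < 1" and \<epsilon>: "0 < \<epsilon>"
  obtains \<alpha> where "cmod \<alpha> < 1" "(SUP z\<in>ball 0 1. cmod (u z)) - \<epsilon> \<le> cmod (u \<alpha>)"
    and "\<And>z. z \<in> pseudo_disc \<alpha> \<eta> \<Longrightarrow> cmod (u z - u \<alpha>) \<le> \<epsilon>"
proof -
  define m where "m = (SUP z\<in>ball 0 1. cmod (u z))"
  have le_m: "cmod (u z) \<le> m" if "cmod z < 1" for z
    unfolding m_def by (rule cSUP_upper[OF _ bdd]) (use that in simp)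
  show ?thesis
  proof (cases "m = 0")
    case True
    then have "u z = 0" if "cmod z < 1" for z using le_m[OF that] by simp
    then show ?thesis using that[of 0] True \<epsilon> by (simp add: m_def mem_pseudo_disc)
  next
    case False
    then have m: "0 < m" using order.trans[OF norm_ge_zero le_m[of 0, simplified]] by simp
    define \<tau> where "\<tau> = min 1 (\<epsilon> * (1 - \<eta>) / (8 * m))"
    have "\<tau> \<le> \<epsilon> * (1 - \<eta>) / (8 * m)" by (simp add: \<tau>_def)
    then have \<tau>: "0 < \<tau>" "\<tau> \<le> 1" "8 * m * \<tau> \<le> \<epsilon> * (1 - \<eta>)"
      using m \<epsilon> \<eta> by (auto simp: \<tau>_def le_divide_eq algebra_simps)
    obtain \<alpha> where \<alpha>: "cmod \<alpha> < 1" "m - m * \<tau> < cmod (u \<alpha>)"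
      using less_cSUP_iff[OF _ bdd, of "m - m * \<tau>"] m \<tau> by (auto simp: m_def)
    show ?thesis
    proof (rule that[OF \<alpha>(1)])
      show "(SUP z\<in>ball 0 1. cmod (u z)) - \<epsilon> \<le> cmod (u \<alpha>)"
        using \<alpha>(2) \<tau>(3) m mult_left_mono[of "1 - \<eta>" 1 \<epsilon>] \<eta>0 \<epsilon> mult_pos_pos[OF m \<tau>(1)]
        unfolding m_def[symmetric] by argo
    next
      fix z assume "z \<in> pseudo_disc \<alpha> \<eta>"
      then have "cmod (u z - u \<alpha>) \<le> 8 * m * \<tau> / (1 - \<eta>)"
        using holomorphic_close_near_almost_maximum[OF holu le_m m \<tau>(1,2) \<alpha>(1) _ \<eta>] \<alpha>(2) by simp
      also have "\<dots> \<le> \<epsilon>" using \<tau> \<eta> by (simp add: divide_le_eq)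
      finally show "cmod (u z - u \<alpha>) \<le> \<epsilon>" .
    qed
  qed
qed

lemma univalent_omits_value:
  assumes "univalent g"
  obtains w0 where "w0 \<notin> g ` ball 0 1"
proof (rule ccontr)
  assume "\<not> thesis"
  then have onto: "g ` ball 0 1 = UNIV" using that by blast
  have hol: "g holomorphic_on ball 0 1" and inj: "inj_on g (ball 0 1)"
    using assms by (auto simp: univalent_def)
  obtain f where holf: "f holomorphic_on g ` ball 0 1" and fg: "\<And>z. z \<in> ball 0 1 \<Longrightarrow> f (g z) = z"
    using holomorphic_has_inverse[OF hol open_ball inj] by blast
  have "range f \<subseteq> ball 0 1"
  proof
    fix y assume "y \<in> range f"
    then obtain w where "y = f w" by blast
    moreover obtain z where "z \<in> ball 0 1" "g z = w" using onto by (metis UNIV_I imageE)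
    ultimately show "y \<in> ball 0 1" using fg by auto
  qed
  then have "bounded (range f)" by (meson bounded_ball bounded_subset)
  then have "f constant_on UNIV" using holf onto Liouville_theorem by metis
  then obtain k where "\<And>w. f w = k" by (auto simp: constant_on_def)
  then show False using fg[of 0] fg[of "1/2"] by simp
qed

lemma univalent_square_root:
  assumes "univalent g" and omit: "w0 \<notin> g ` ball 0 1"
  obtains \<phi> where "\<phi> holomorphic_on ball 0 1" "inj_on \<phi> (ball 0 1)"
    and "\<And>z. z \<in> ball 0 1 \<Longrightarrow> g z = (\<phi> z)^2 + w0"
    and "\<And>z w. z \<in> ball 0 1 \<Longrightarrow> w \<in> ball 0 1 \<Longrightarrow> \<phi> w \<noteq> - \<phi> z"
proof -
  have hol: "g holomorphic_on ball 0 1" and inj: "inj_on g (ball 0 1)"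
    using assms by (auto simp: univalent_def)
  have "(\<lambda>z. g z - w0) holomorphic_on ball 0 1" using hol by (intro holomorphic_intros)
  moreover have "\<forall>z\<in>ball 0 1. g z - w0 \<noteq> 0" using omit by auto
  moreover have "simply_connected (ball (0::complex) 1)" by (simp add: convex_imp_simply_connected)
  ultimately obtain \<phi> where hol\<phi>: "\<phi> holomorphic_on ball 0 1"
    and sq: "\<And>z. z \<in> ball 0 1 \<Longrightarrow> g z - w0 = (\<phi> z)^2"
    using simply_connected_eq_holomorphic_sqrt[OF open_ball, of 0 1] by force
  have g\<phi>: "g z = (\<phi> z)^2 + w0" if "z \<in> ball 0 1" for z using sq[OF that] by (simp add: algebra_simps)
  show ?thesis
  proof (rule that[OF hol\<phi> _ g\<phi>])
    show "inj_on \<phi> (ball 0 1)"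
    proof (rule inj_onI)
      fix x y assume "x \<in> ball 0 1" "y \<in> ball 0 1" "\<phi> x = \<phi> y"
      then show "x = y" using inj g\<phi> by (metis inj_onD)
    qed
  next
    fix z w :: complex assume zw: "z \<in> ball 0 1" "w \<in> ball 0 1"
    show "\<phi> w \<noteq> - \<phi> z"
    proof
      assume "\<phi> w = - \<phi> z"
      then have "g w = g z" using zw by (simp add: g\<phi>)
      then have "w = z" using inj zw by (auto dest: inj_onD)
      with \<open>\<phi> w = - \<phi> z\<close> have "g z = w0" using zw by (simp add: g\<phi>)
      then show False using omit zw by auto
    qed
  qed
qed

lemma antipodal_free_bounded_away:
  assumes "\<phi> holomorphic_on ball 0 1" "inj_on \<phi> (ball 0 1)"
    and antipodal: "\<And>z w. z \<in> ball 0 1 \<Longrightarrow> w \<in> ball 0 1 \<Longrightarrow> \<phi> w \<noteq> - \<phi> z"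
  obtains \<rho> where "0 < \<rho>" "\<And>z. z \<in> ball 0 1 \<Longrightarrow> \<rho> \<le> cmod (\<phi> z + \<phi> 0)"
proof -
  have "open (\<phi> ` ball 0 1)" by (rule open_mapping_thm3[OF assms(1) open_ball assms(2)])
  moreover have "\<phi> 0 \<in> \<phi> ` ball 0 1" by simp
  ultimately obtain \<rho> where \<rho>: "0 < \<rho>" "ball (\<phi> 0) \<rho> \<subseteq> \<phi> ` ball 0 1" by (meson openE)
  have "\<rho> \<le> cmod (\<phi> z + \<phi> 0)" if z: "z \<in> ball 0 1" for z
  proof (rule ccontr)
    assume "\<not> \<rho> \<le> cmod (\<phi> z + \<phi> 0)"
    moreover have "dist (\<phi> 0) (- \<phi> z) = cmod (\<phi> z + \<phi> 0)"
      by (metis dist_norm add.commute diff_minus_eq_add)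
    ultimately have "- \<phi> z \<in> \<phi> ` ball 0 1" using \<rho>(2) by auto
    then show False using antipodal[OF z] by (metis imageE)
  qed
  then show ?thesis using \<rho>(1) that by blast
qed

lemma univalent_reciprocal_representation:
  assumes "univalent g"
  obtains u s w0 where "u holomorphic_on ball 0 1" "bdd_above ((\<lambda>z. cmod (u z)) ` ball 0 1)"
    and "u 0 \<noteq> 0" and "\<And>z. z \<in> ball 0 1 \<Longrightarrow> g z = (1 / u z - s)^2 + w0"
proof -
  obtain w0 where omit: "w0 \<notin> g ` ball 0 1"
    by (rule univalent_omits_value[OF assms]) (rule that)
  obtain \<phi> where hol\<phi>: "\<phi> holomorphic_on ball 0 1" "inj_on \<phi> (ball 0 1)"
    and g\<phi>: "\<And>z. z \<in> ball 0 1 \<Longrightarrow> g z = (\<phi> z)^2 + w0"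
    and antipodal: "\<And>z w. z \<in> ball 0 1 \<Longrightarrow> w \<in> ball 0 1 \<Longrightarrow> \<phi> w \<noteq> - \<phi> z"
    by (rule univalent_square_root[OF assms omit]) (rule that)
  obtain \<rho> where \<rho>: "0 < \<rho>" "\<And>z. z \<in> ball 0 1 \<Longrightarrow> \<rho> \<le> cmod (\<phi> z + \<phi> 0)"
    using antipodal_free_bounded_away[OF hol\<phi> antipodal] by blast
  define u where "u z = 1 / (\<phi> z + \<phi> 0)" for z
  have nz: "\<phi> z + \<phi> 0 \<noteq> 0" if "z \<in> ball 0 1" for z
    using \<rho>(1) \<rho>(2)[OF that] by (metis norm_zero not_le)
  show ?thesis
  proof (rule that)
    show "u holomorphic_on ball 0 1"
      unfolding u_def using nz by (intro holomorphic_intros hol\<phi>) auto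
    have "cmod (u z) \<le> 1 / \<rho>" if "z \<in> ball 0 1" for z
      using \<rho> that by (simp add: u_def norm_divide frac_le)
    then show "bdd_above ((\<lambda>z. cmod (u z)) ` ball 0 1)" by (meson bdd_aboveI2)
    show "u 0 \<noteq> 0" using nz[of 0] by (simp add: u_def)
    show "g z = (1 / u z - \<phi> 0)^2 + w0" if "z \<in> ball 0 1" for z
      using g\<phi>[OF that] by (simp add: u_def)
  qed
qed

lemma norm_diff_square_reciprocal_le:
  fixes a b s :: complex
  assumes m: "0 < m" and a: "m / 2 \<le> cmod a" and b: "m / 2 \<le> cmod b" and "cmod (a - b) \<le> d"
  shows "cmod ((1 / b - s)^2 - (1 / a - s)^2) \<le> 4 * d / m^2 * (4 / m + 2 * cmod s)"
proof -
  have a0: "0 < cmod a" and b0: "0 < cmod b" using m a b by argo+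
  have "0 \<le> d" using assms(4) norm_ge_zero order.trans by blast
  have inv_le: "cmod (1 / c) \<le> 2 / m" if "m / 2 \<le> cmod c" for c :: complex
    using that m by (simp add: norm_divide divide_simps)
  have "(1 / b - s)^2 - (1 / a - s)^2 = (a - b) / (a * b) * ((1 / b + 1 / a) - 2 * s)"
    using a0 b0 by (simp add: power2_eq_square field_simps)
  then have "cmod ((1 / b - s)^2 - (1 / a - s)^2)
      = cmod (a - b) / (cmod a * cmod b) * cmod ((1 / b + 1 / a) - 2 * s)"
    by (simp add: norm_mult norm_divide)
  also have "\<dots> \<le> d / (m / 2 * (m / 2)) * (4 / m + 2 * cmod s)"
  proof (rule mult_mono[OF frac_le])
    show "m / 2 * (m / 2) \<le> cmod a * cmod b" using a b m by (intro mult_mono) auto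
    show "cmod ((1 / b + 1 / a) - 2 * s) \<le> 4 / m + 2 * cmod s"
      using inv_le[OF a] inv_le[OF b] norm_triangle_ineq4[of "1 / b + 1 / a" "2 * s"]
        norm_triangle_ineq[of "1 / b" "1 / a"] by (simp add: norm_mult)
  qed (use assms \<open>0 \<le> d\<close> in auto)
  also have "\<dots> = 4 * d / m^2 * (4 / m + 2 * cmod s)" by (simp add: power2_eq_square)
  finally show ?thesis .
qed

lemma univalent_small_oscillation:
  assumes "univalent g" "0 \<le> \<eta>" "\<eta> < 1" "0 < \<epsilon>"
  obtains \<alpha> where "cmod \<alpha> < 1"
    and "\<And>z w. z \<in> pseudo_disc \<alpha> \<eta> \<Longrightarrow> w \<in> pseudo_disc \<alpha> \<eta> \<Longrightarrow> cmod (g w - g z) \<le> \<epsilon>"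
proof -
  obtain u s w0 where holu: "u holomorphic_on ball 0 1"
    and bdd: "bdd_above ((\<lambda>z. cmod (u z)) ` ball 0 1)" and "u 0 \<noteq> 0"
    and gu: "\<And>z. z \<in> ball 0 1 \<Longrightarrow> g z = (1 / u z - s)^2 + w0"
    by (rule univalent_reciprocal_representation[OF assms(1)]) (rule that)
  define m where "m = (SUP z\<in>ball 0 1. cmod (u z))"
  have "cmod (u 0) \<le> m" unfolding m_def by (rule cSUP_upper[OF _ bdd]) simp
  with \<open>u 0 \<noteq> 0\<close> have m: "0 < m" by (meson norm_le_zero_iff not_le order.strict_trans2)
  define K where "K = 4 / m + 2 * cmod s"
  have K: "0 < K" using m by (simp add: K_def add_pos_nonneg)
  define \<delta> where "\<delta> = min (m / 4) (\<epsilon> * m^2 / (8 * K))"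
  have "\<delta> \<le> \<epsilon> * m^2 / (8 * K)" by (simp add: \<delta>_def)
  then have \<delta>: "0 < \<delta>" "\<delta> \<le> m / 4" "8 * \<delta> * K \<le> \<epsilon> * m^2"
    using m K assms(4) by (auto simp: \<delta>_def le_divide_eq mult.commute mult.left_commute)
  obtain \<alpha> where \<alpha>: "cmod \<alpha> < 1" "m - \<delta> \<le> cmod (u \<alpha>)"
    and close: "\<And>z. z \<in> pseudo_disc \<alpha> \<eta> \<Longrightarrow> cmod (u z - u \<alpha>) \<le> \<delta>"
    by (rule holomorphic_bounded_close_to_sup[OF holu bdd assms(2,3) \<delta>(1), folded m_def]) (rule that)
  have large: "m / 2 \<le> cmod (u z)" if "z \<in> pseudo_disc \<alpha> \<eta>" for z
    using close[OF that] \<alpha>(2) \<delta>(2) norm_triangle_ineq2[of "u \<alpha>" "u z"] by (simp add: norm_minus_commute)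
  show ?thesis
  proof (rule that[OF \<alpha>(1)])
    fix z w assume z: "z \<in> pseudo_disc \<alpha> \<eta>" and w: "w \<in> pseudo_disc \<alpha> \<eta>"
    have "cmod (u z - u w) \<le> 2 * \<delta>"
      using close[OF z] close[OF w] norm_triangle_ineq4[of "u z - u \<alpha>" "u w - u \<alpha>"] by simp
    then have "cmod ((1 / u w - s)^2 - (1 / u z - s)^2) \<le> 4 * (2 * \<delta>) / m^2 * K"
      unfolding K_def by (rule norm_diff_square_reciprocal_le[OF m large[OF z] large[OF w]])
    also have "\<dots> \<le> \<epsilon>" using \<delta>(3) m by (simp add: divide_le_eq)
    finally show "cmod (g w - g z) \<le> \<epsilon>"
      using z w by (simp add: gu mem_pseudo_disc)
  qed
qed

lemma deriv_bound_of_oscillation: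
  assumes holg: "g holomorphic_on ball 0 1" and \<eta>: "0 < \<eta>" "\<eta> < 1" and \<alpha>: "cmod \<alpha> < 1"
    and "0 < M"
    and osc: "\<And>z w. z \<in> pseudo_disc \<alpha> ((1 + \<eta>) / 2) \<Longrightarrow> w \<in> pseudo_disc \<alpha> ((1 + \<eta>) / 2)
                \<Longrightarrow> cmod (g w - g z) \<le> M"
    and z: "z \<in> pseudo_disc \<alpha> \<eta>"
  shows "cmod (deriv g z) * (1 - cmod z) \<le> 64 * M / (1 - \<eta>)^2"
proof -
  define R where "R = (1 - \<eta>) * (1 - cmod \<alpha>) / 16"
  have R: "0 < R" using \<eta> \<alpha> by (simp add: R_def)
  have big: "ball z (2 * R) \<subseteq> pseudo_disc \<alpha> ((1 + \<eta>) / 2)"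
    using ball_subset_pseudo_disc_enlarged[OF \<eta> \<alpha> z] by (simp add: R_def)
  moreover have small: "cball z R \<subseteq> ball z (2 * R)" using R by (simp add: cball_subset_ball_iff)
  ultimately have z': "z \<in> pseudo_disc \<alpha> ((1 + \<eta>) / 2)" using R by auto
  have "cball z R \<subseteq> ball 0 1" using big small pseudo_disc_subset_ball by blast
  then have hol: "g holomorphic_on ball z R" and cont: "continuous_on (cball z R) g"
    using holg ball_subset_cball by (blast intro: holomorphic_on_subset holomorphic_on_imp_continuous_on)+
  have bounded: "g w \<in> ball (g z) (2 * M)" if "w \<in> ball z R" for w
  proof -
    have "w \<in> pseudo_disc \<alpha> ((1 + \<eta>) / 2)" using that big small ball_subset_cball by blast
    then have "cmod (g w - g z) \<le> M" by (rule osc[OF z'])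
    then show ?thesis using \<open>0 < M\<close> by (simp add: dist_norm norm_minus_commute)
  qed
  have "cmod (deriv g z) \<le> 2 * M / R"
    using Cauchy_higher_deriv_bound[OF hol cont bounded R, of 1] by simp
  moreover have "1 - cmod z \<le> 2 * (1 - cmod \<alpha>) / (1 - \<eta>)"
    by (rule one_minus_norm_le_of_mem_pseudo_disc[OF \<eta> \<alpha> z])
  moreover have "0 \<le> 1 - cmod z" using z by (simp add: mem_pseudo_disc)
  ultimately have "cmod (deriv g z) * (1 - cmod z) \<le> (2 * M / R) * (2 * (1 - cmod \<alpha>) / (1 - \<eta>))"
    using \<open>0 < M\<close> R by (intro mult_mono) auto
  also have "\<dots> = 64 * M / (1 - \<eta>)^2"
  proof -
    have key: "2 * M / (e * a / 16) * (2 * a / e) = 64 * M / e^2" if "a \<noteq> 0" "e \<noteq> 0" for a e :: real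
      using that by (simp add: field_simps power2_eq_square)
    show ?thesis unfolding R_def by (rule key) (use \<eta> \<alpha> in auto)
  qed
  finally show ?thesis .
qed

theorem mainTheorem11:
  fixes g :: "complex \<Rightarrow> complex"
  assumes "univalent g"
  shows "\<not> (\<exists>\<eta> \<delta> c. 0 < \<eta> \<and> \<eta> < 1 \<and> \<delta> > 0 \<and> c > 0 \<and>
            (\<forall>\<alpha> \<in> ball 0 1.
               norm_area (G_set g c \<inter> pseudo_disc \<alpha> \<eta>) \<ge> \<delta> * norm_area (pseudo_disc \<alpha> \<eta>)))"
proof (intro notI, elim exE conjE)
  fix \<eta> \<delta> c :: real
  assume \<eta>: "0 < \<eta>" "\<eta> < 1" and "\<delta> > 0" "c > 0"
    and dense: "\<forall>\<alpha> \<in> ball 0 1. norm_area (G_set g c \<inter> pseudo_disc \<alpha> \<eta>) \<ge> \<delta> * norm_area (pseudo_disc \<alpha> \<eta>)"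
  define M where "M = c * (1 - \<eta>)^2 / 64"
  have "0 < M" using \<eta> \<open>c > 0\<close> by (simp add: M_def)
  obtain \<alpha> where \<alpha>: "cmod \<alpha> < 1"
    and osc: "\<And>z w. z \<in> pseudo_disc \<alpha> ((1 + \<eta>) / 2) \<Longrightarrow> w \<in> pseudo_disc \<alpha> ((1 + \<eta>) / 2)
                \<Longrightarrow> cmod (g w - g z) \<le> M"
    using univalent_small_oscillation[OF assms _ _ \<open>0 < M\<close>, of "(1 + \<eta>) / 2"] \<eta> by auto
  have hol: "g holomorphic_on ball 0 1" using assms by (simp add: univalent_def)
  have "cmod (deriv g z) * (1 - cmod z) \<le> c" if "z \<in> pseudo_disc \<alpha> \<eta>" for z
    using deriv_bound_of_oscillation[OF hol \<eta> \<alpha> \<open>0 < M\<close> osc that] \<eta> by (simp add: M_def)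
  then have "G_set g c \<inter> pseudo_disc \<alpha> \<eta> = {}" by (force simp: G_set_def)
  then have "norm_area (G_set g c \<inter> pseudo_disc \<alpha> \<eta>) = 0" by (simp add: norm_area_def)
  moreover have "\<delta> * norm_area (pseudo_disc \<alpha> \<eta>) \<le> norm_area (G_set g c \<inter> pseudo_disc \<alpha> \<eta>)"
    using dense \<alpha> by simp
  moreover have "0 < \<delta> * norm_area (pseudo_disc \<alpha> \<eta>)"
    using norm_area_pseudo_disc_pos[OF \<eta> \<alpha>] \<open>\<delta> > 0\<close> by simp
  ultimately show False by simp
qed

end
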